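(* Let $n\ge 3$, let $F$ be a set of edges of $Q_n$, and let $T$ be a proper subset of the vertex set of $Q_n$ with $|T|\ge 3$ and $|T|_0\ge|T|_1$, such that every edge of $Q_n$ joining a vertex of parity 0 in $T$ to a vertex outside $T$ belongs to $F$. Suppose $T$ is partitioned into two sets $T_1,T_2$, each inducing a connected subgraph of $Q_n$ and each balanced ($|T_j|_0=|T_j|_1$ for $j=1,2$), and suppose there are adjacent vertices $v_1\in T_1$, $v_2\in T_2$ such that every path in the subgraph induced by $T$ from $v_1$ to $v_2$ uses the edge $(v_1,v_2)$. Then $F$ is not minimal.
   Context: $Q_n$ is the $n$-dimensional hypercube on the binary strings of length $n$, two strings adjacent iff they differ in exactly one bit. The parity of a vertex is the number of ones in its label modulo 2. For a set $T$ of vertices, $|T|_0$ and $|T|_1$ denote the numbers of vertices of parity 0 and parity 1 in $T$. $F$ is a set of "faulty" edges; $Q_n-F$ is the graph with all vertices of $Q_n$ and the edges of $Q_n$ not in $F$. "$F$ is not minimal" means that there is a proper subset $F'\subsetneq F$ such that $Q_n-F'$ has no Hamiltonian cycle. *)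

theory Defs
  imports Main
begin

text \<open>Vertices of Q_n: binary strings of length n, encoded as bool lists (True = 1).\<close>

definition hverts :: "nat \<Rightarrow> bool list set" where
  "hverts n = {xs. length xs = n}"

definition hadj :: "bool list \<Rightarrow> bool list \<Rightarrow> bool" where
  "hadj u v \<longleftrightarrow> length u = length v \<and> card {i. i < length u \<and> u ! i \<noteq> v ! i} = 1"

definition hedges :: "nat \<Rightarrow> bool list set set" where
  "hedges n = {{u, v} | u v. u \<in> hverts n \<and> v \<in> hverts n \<and> hadj u v}"

definition parity :: "bool list \<Rightarrow> nat" where
  "parity u = count_list u True mod 2"

definition card0 :: "bool list set \<Rightarrow> nat" where
  "card0 T = card {u \<in> T. parity u = 0}"

definition card1 :: "bool list set \<Rightarrow> nat" where
  "card1 T = card {u \<in> T. parity u = 1}"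

definition ham_cycle :: "nat \<Rightarrow> bool list set set \<Rightarrow> bool list list \<Rightarrow> bool" where
  "ham_cycle n F cyc \<longleftrightarrow>
     distinct cyc \<and> set cyc = hverts n \<and> length cyc \<ge> 3 \<and>
     (\<forall>i < length cyc. hadj (cyc ! i) (cyc ! ((i + 1) mod length cyc)) \<and>
                       {cyc ! i, cyc ! ((i + 1) mod length cyc)} \<notin> F)"

definition has_ham_cycle :: "nat \<Rightarrow> bool list set set \<Rightarrow> bool" where
  "has_ham_cycle n F \<longleftrightarrow> (\<exists>cyc. ham_cycle n F cyc)"

definition not_minimal :: "nat \<Rightarrow> bool list set set \<Rightarrow> bool" where
  "not_minimal n F \<longleftrightarrow> (\<exists>F'. F' \<subset> F \<and> \<not> has_ham_cycle n F')"

definition ipath :: "bool list set \<Rightarrow> bool list list \<Rightarrow> bool" where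
  "ipath S p \<longleftrightarrow> p \<noteq> [] \<and> distinct p \<and> set p \<subseteq> S \<and>
     (\<forall>i. Suc i < length p \<longrightarrow> hadj (p ! i) (p ! Suc i))"

definition uses_edge :: "bool list list \<Rightarrow> bool list \<Rightarrow> bool list \<Rightarrow> bool" where
  "uses_edge p a b \<longleftrightarrow> (\<exists>i. Suc i < length p \<and> {p ! i, p ! Suc i} = {a, b})"

definition induces_connected :: "bool list set \<Rightarrow> bool" where
  "induces_connected S \<longleftrightarrow> S \<noteq> {} \<and>
     (\<forall>u\<in>S. \<forall>v\<in>S. \<exists>p. ipath S p \<and> hd p = u \<and> last p = v)"

end

theory Submission
  imports Defs
begin

text \<open>Since every \<open>T\<close>-path from \<open>v\<^sub>1\<close> to \<open>v\<^sub>2\<close> uses the edge \<open>v\<^sub>1v\<^sub>2\<close>,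
  this edge is the only one between \<open>T\<^sub>1\<close> and \<open>T\<^sub>2\<close>. Let \<open>A\<close> be the part whose
  endpoint \<open>a\<close> of this edge is even and \<open>B\<close> the other one, with odd endpoint \<open>b\<close>.
  Let \<open>F'\<close> consist of the edges of \<open>F\<close> leaving \<open>B\<close> at an even vertex. A Hamiltonian
  cycle of \<open>Q\<^sub>n - F'\<close> cannot exist: both cycle neighbours of an even vertex of \<open>B\<close>
  would be odd vertices of \<open>B\<close>, and as \<open>B\<close> is balanced this closes \<open>B\<close> under the
  cycle, so \<open>B\<close> would contain all vertices. Finally \<open>F' \<noteq> F\<close>: counting the edges between
  even and odd vertices of the balanced set \<open>A\<close> shows, for \<open>n \<ge> 3\<close>, that some even
  vertex of \<open>A\<close> has a neighbour outside \<open>T\<close>, and that edge lies in \<open>F\<close> but not in \<open>F'\<close>.\<close>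

definition flip :: "bool list \<Rightarrow> nat \<Rightarrow> bool list" where
  "flip u i = u[i := \<not> u ! i]"

lemma length_flip [simp]: "length (flip u i) = length u"
  by (simp add: flip_def)

lemma flip_flip [simp]: "flip (flip u i) i = u"
  by (cases "i < length u") (auto simp: flip_def intro!: nth_equalityI simp: nth_list_update)

lemma flip_commute: "flip (flip u i) j = flip (flip u j) i"
  by (cases "i = j") (auto simp: flip_def list_update_swap)

lemma flip_eq_flip_iff: "i < length u \<Longrightarrow> j < length u \<Longrightarrow> flip u i = flip u j \<longleftrightarrow> i = j"
  by (metis flip_def nth_list_update_eq nth_list_update_neq)

lemma hadj_flip:
  assumes "i < length u"
  shows "hadj u (flip u i)"
proof -
  have "{j. j < length u \<and> u ! j \<noteq> flip u i ! j} = {i}"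
    using assms by (auto simp: flip_def nth_list_update)
  then show ?thesis by (simp add: hadj_def)
qed

lemma hadj_iff_flip: "hadj u v \<longleftrightarrow> (\<exists>i<length u. v = flip u i)"
proof
  assume h: "hadj u v"
  then obtain i where diff: "{j. j < length u \<and> u ! j \<noteq> v ! j} = {i}"
    by (auto simp: hadj_def card_1_singleton_iff)
  then have "i < length u" by auto
  moreover have "v = flip u i"
  proof (rule nth_equalityI)
    show "length v = length (flip u i)" using h by (simp add: hadj_def)
    fix j assume "j < length v"
    then show "v ! j = flip u i ! j"
      using diff h by (cases "j = i") (auto simp: flip_def hadj_def)
  qed
  ultimately show "\<exists>i<length u. v = flip u i" by blast
qed (use hadj_flip in blast)

lemma hadj_sym: "hadj u v \<Longrightarrow> hadj v u"
  by (metis flip_flip hadj_iff_flip length_flip)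

lemma hadj_length: "hadj u v \<Longrightarrow> length v = length u"
  by (simp add: hadj_def)

lemma neighbours_eq_flip_image: "{v. hadj u v} = flip u ` {..<length u}"
  by (auto simp: hadj_iff_flip)

lemma finite_neighbours: "finite {v. hadj u v}"
  by (simp add: neighbours_eq_flip_image)

lemma card_neighbours: "card {v. hadj u v} = length u"
proof -
  have "inj_on (flip u) {..<length u}"
    by (auto intro: inj_onI simp: flip_eq_flip_iff)
  then show ?thesis by (simp add: neighbours_eq_flip_image card_image)
qed

lemma card_neighbours_in_le: "card {v \<in> X. hadj u v} \<le> length u"
  using card_mono[OF finite_neighbours, of "{v \<in> X. hadj u v}" u] by (auto simp: card_neighbours)

lemma card_neighbours_in_le_if_outside:
  assumes "hadj u z" "z \<notin> X"
  shows "card {v \<in> X. hadj u v} \<le> length u - 1"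
proof -
  have "{v \<in> X. hadj u v} \<subseteq> {v. hadj u v} - {z}" using assms by auto
  then show ?thesis
    using assms card_mono[of "{v. hadj u v} - {z}"] by (simp add: finite_neighbours card_neighbours)
qed

lemma finite_hverts: "finite (hverts n)"
  using finite_lists_length_eq[of "UNIV :: bool set" n] by (simp add: hverts_def)

lemma even_count_flip_iff: "i < length u \<Longrightarrow> even (count_list (flip u i) True) \<longleftrightarrow> odd (count_list u True)"
proof (induction u arbitrary: i)
  case (Cons a u)
  then show ?case by (cases i) (auto simp: flip_def)
qed simp

lemma parity_le_1: "parity u \<le> 1"
  by (simp add: parity_def)

lemma parity_hadj: "hadj u v \<Longrightarrow> parity v = 1 - parity u"
  by (auto simp: hadj_iff_flip parity_def even_count_flip_iff odd_iff_mod_2_eq_one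
      dest: even_count_flip_iff)

lemma ipath_iff_successively:
  "ipath S p \<longleftrightarrow> p \<noteq> [] \<and> distinct p \<and> set p \<subseteq> S \<and> successively hadj p"
  by (simp add: ipath_def successively_conv_nth)

lemma uses_edge_iff_not_successively:
  "uses_edge p a b \<longleftrightarrow> \<not> successively (\<lambda>x y. {x, y} \<noteq> {a, b}) p"
  by (auto simp: uses_edge_def successively_conv_nth)

lemma uses_edge_mem: "uses_edge p a b \<Longrightarrow> a \<in> set p \<and> b \<in> set p"
  unfolding uses_edge_def by (metis Suc_lessD doubleton_eq_iff nth_mem)

lemma ipath_append:
  assumes "ipath S p" "ipath S' q" "S \<inter> S' = {}" "hadj (last p) (hd q)"
  shows "ipath (S \<union> S') (p @ q)"
  using assms by (auto simp: ipath_iff_successively successively_append_iff)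

lemma uses_edge_append:
  assumes "uses_edge (p @ q) a b" "p \<noteq> []" "q \<noteq> []"
  shows "uses_edge p a b \<or> uses_edge q a b \<or> {last p, hd q} = {a, b}"
  using assms by (auto simp: uses_edge_iff_not_successively successively_append_iff)

lemma edge_between_parts_unique:
  assumes "T1 \<inter> T2 = {}" "induces_connected T1" "induces_connected T2"
    and "v1 \<in> T1" "v2 \<in> T2"
    and cut: "\<forall>p. ipath (T1 \<union> T2) p \<and> hd p = v1 \<and> last p = v2 \<longrightarrow> uses_edge p v1 v2"
    and "x \<in> T1" "y \<in> T2" "hadj x y"
  shows "x = v1 \<and> y = v2"
proof -
  obtain p where p: "ipath T1 p" "hd p = v1" "last p = x"
    using assms unfolding induces_connected_def by blast
  obtain q where q: "ipath T2 q" "hd q = y" "last q = v2"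
    using assms unfolding induces_connected_def by blast
  have "ipath (T1 \<union> T2) (p @ q)"
    using ipath_append[OF p(1) q(1)] assms p q by simp
  moreover have "p \<noteq> []" "q \<noteq> []" using p q by (auto simp: ipath_def)
  ultimately have "uses_edge (p @ q) v1 v2" using cut p q by simp
  then have "uses_edge p v1 v2 \<or> uses_edge q v1 v2 \<or> {x, y} = {v1, v2}"
    using uses_edge_append \<open>p \<noteq> []\<close> \<open>q \<noteq> []\<close> p q by metis
  moreover have "v2 \<notin> set p" "v1 \<notin> set q"
    using p q assms by (auto simp: ipath_def)
  ultimately show ?thesis
    using assms uses_edge_mem by (auto simp: doubleton_eq_iff)
qed

lemma card_nth_indices:
  assumes "distinct xs"
  shows "card {i. i < length xs \<and> P (xs ! i)} = card {x \<in> set xs. P x}"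
proof -
  have "{x \<in> set xs. P x} = (!) xs ` {i. i < length xs \<and> P (xs ! i)}"
    by (auto simp: in_set_conv_nth)
  moreover have "inj_on ((!) xs) {i. i < length xs \<and> P (xs ! i)}"
    using assms by (auto intro: inj_onI simp: nth_eq_iff_index_eq)
  ultimately show ?thesis by (simp add: card_image)
qed

lemma Suc_mod_pred_mod: "j < L \<Longrightarrow> Suc ((j + L - 1) mod L) mod L = j"
  by (simp add: mod_Suc_eq)

lemma subset_if_closed_under_Suc_mod:
  assumes "i0 \<in> I" "i0 < L" and closed: "\<And>i. i \<in> I \<Longrightarrow> Suc i mod L \<in> I"
  shows "{..<L} \<subseteq> I"
proof
  have shift: "(i0 + k) mod L \<in> I" for k
  proof (induction k)
    case (Suc k)
    then have "Suc ((i0 + k) mod L) mod L \<in> I" by (rule closed)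
    then show ?case by (simp add: mod_Suc_eq)
  qed (use assms in simp)
  fix j assume "j \<in> {..<L}"
  then have "(i0 + (j + L - i0)) mod L = j" using assms(2) by simp
  then show "j \<in> I" using shift by metis
qed

text \<open>The predecessor map sends \<open>I0\<close> injectively, hence onto, the equally large \<open>I1\<close>;
  so the successor of every index of \<open>I1\<close> lies in \<open>I0\<close>.\<close>
lemma cycle_indices_covered_if_balanced:
  assumes "I0 \<subseteq> {..<L}" "I1 \<subseteq> {..<L}" "card I0 = card I1" "I0 \<union> I1 \<noteq> {}"
    and succ: "\<And>i. i \<in> I0 \<Longrightarrow> Suc i mod L \<in> I1"
    and pred: "\<And>i. i \<in> I0 \<Longrightarrow> (i + L - 1) mod L \<in> I1"
  shows "{..<L} \<subseteq> I0 \<union> I1"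
proof -
  have "inj_on (\<lambda>i. (i + L - 1) mod L) I0"
    by (rule inj_on_inverseI[where g = "\<lambda>i. Suc i mod L"]) (use assms(1) Suc_mod_pred_mod in auto)
  moreover have "finite I1" using assms(2) finite_subset by blast
  ultimately have pred_onto: "(\<lambda>i. (i + L - 1) mod L) ` I0 = I1"
    using assms pred by (intro card_subset_eq) (auto simp: card_image)
  have "Suc i mod L \<in> I0 \<union> I1" if i: "i \<in> I0 \<union> I1" for i
  proof (cases "i \<in> I0")
    case False
    then obtain j where "j \<in> I0" "i = (j + L - 1) mod L" using i pred_onto by blast
    then show ?thesis using assms(1) Suc_mod_pred_mod by auto
  qed (simp add: succ)
  moreover obtain i0 where "i0 \<in> I0 \<union> I1" using assms(4) by blast
  moreover have "i0 < L" using calculation(2) assms(1,2) by auto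
  ultimately show ?thesis by (rule subset_if_closed_under_Suc_mod[rotated 2])
qed

lemma ham_cycle_leaves_balanced_set:
  assumes ham: "ham_cycle n F cyc"
    and S: "S \<subseteq> hverts n" "S \<noteq> {}" "S \<noteq> hverts n" and bal: "card0 S = card1 S"
  shows "\<exists>u\<in>S. \<exists>w\<in>hverts n - S. parity u = 0 \<and> hadj u w \<and> {u, w} \<notin> F"
proof (rule ccontr)
  assume "\<not> ?thesis"
  then have sealed: "w \<in> S" if "u \<in> S" "parity u = 0" "hadj u w" "{u, w} \<notin> F" "w \<in> hverts n" for u w
    using that by blast
  define L where "L = length cyc"
  define c where "c i = cyc ! i" for i
  define I0 where "I0 = {i. i < L \<and> c i \<in> S \<and> parity (c i) = 0}"
  define I1 where "I1 = {i. i < L \<and> c i \<in> S \<and> parity (c i) = 1}"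
  have L: "L \<ge> 3" and vertices: "set cyc = hverts n" and "distinct cyc"
    and step: "\<And>i. i < L \<Longrightarrow> hadj (c i) (c (Suc i mod L)) \<and> {c i, c (Suc i mod L)} \<notin> F"
    using ham unfolding ham_cycle_def L_def c_def by simp_all
  have c_surj: "\<exists>i<L. c i = u" if "u \<in> hverts n" for u
    using vertices that by (auto simp: c_def L_def in_set_conv_nth)
  have stays_odd: "c j \<in> S \<and> parity (c j) = 1"
    if "i \<in> I0" "j < L" "hadj (c i) (c j)" "{c i, c j} \<notin> F" for i j
  proof -
    have i: "c i \<in> S" "parity (c i) = 0" using that(1) by (simp_all add: I0_def)
    have "c j \<in> hverts n" using vertices nth_mem[of j cyc] \<open>j < L\<close> by (simp add: c_def L_def)
    then show ?thesis using sealed[OF i that(3,4)] parity_hadj[OF that(3)] i by simp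
  qed
  have succ: "Suc i mod L \<in> I1" if "i \<in> I0" for i
  proof -
    have "i < L" using that by (simp add: I0_def)
    then show ?thesis using stays_odd[OF that] step L by (simp add: I1_def)
  qed
  have pred: "(i + L - 1) mod L \<in> I1" if "i \<in> I0" for i
  proof -
    have "i < L" using that by (simp add: I0_def)
    then have "hadj (c i) (c ((i + L - 1) mod L)) \<and> {c i, c ((i + L - 1) mod L)} \<notin> F"
      using step[of "(i + L - 1) mod L"] L Suc_mod_pred_mod[of i L]
      by (auto simp: hadj_sym insert_commute)
    then show ?thesis using stays_odd[OF that] L by (simp add: I1_def)
  qed
  have "{x \<in> set cyc. x \<in> S \<and> parity x = k} = {x \<in> S. parity x = k}" for k
    using S(1) vertices by auto
  then have card: "card I0 = card I1"
    using card_nth_indices[OF \<open>distinct cyc\<close>, of "\<lambda>x. x \<in> S \<and> parity x = _"] bal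
    by (simp add: I0_def I1_def c_def L_def card0_def card1_def)
  have indices: "I0 \<subseteq> {..<L}" "I1 \<subseteq> {..<L}" by (auto simp: I0_def I1_def)
  have "I0 \<union> I1 \<noteq> {}"
  proof -
    obtain i0 where "i0 < L" "c i0 \<in> S" using S c_surj by blast
    then have "i0 \<in> I0 \<union> I1" using parity_le_1[of "c i0"] by (auto simp: I0_def I1_def)
    then show ?thesis by blast
  qed
  then have "{..<L} \<subseteq> I0 \<union> I1"
    using cycle_indices_covered_if_balanced[OF indices card _ succ pred] by blast
  then have "hverts n \<subseteq> S"
    using c_surj unfolding I0_def I1_def by blast
  then show False using S by blast
qed

lemma sum_add_card_eq:
  assumes "finite S" "D \<subseteq> S"
  shows "sum g S + card D = (\<Sum>y\<in>S. g y + (if y \<in> D then 1 else 0))"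
  using assms by (simp add: sum.distrib sum.If_cases Int_absorb1)

lemma odd_neighbour_with_exit:
  assumes A: "A \<subseteq> hverts n" and "a \<in> A" "parity a = 0" "b \<notin> A"
    and closed: "\<And>x w. x \<in> A \<Longrightarrow> parity x = 0 \<Longrightarrow> hadj x w \<Longrightarrow> w \<in> A \<or> (x = a \<and> w = b)"
    and b: "b = flip a i" "i < n" and j: "j < n" "j \<noteq> i"
  shows "flip a j \<in> A \<and> parity (flip a j) = 1 \<and> flip (flip a j) i \<notin> A"
proof -
  have len: "length a = n" using A \<open>a \<in> A\<close> by (auto simp: hverts_def)
  have aj: "hadj a (flip a j)" using hadj_flip j len by simp
  have "flip a j \<noteq> b" using b j len flip_eq_flip_iff by simp
  then have "flip a j \<in> A" using closed[OF \<open>a \<in> A\<close> \<open>parity a = 0\<close> aj] by blast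
  moreover have odd: "parity (flip a j) = 1" using parity_hadj[OF aj] \<open>parity a = 0\<close> by simp
  moreover have "flip (flip a j) i \<notin> A"
  proof
    define z where "z = flip (flip a j) i"
    assume "z \<in> A"
    have "hadj (flip a j) z" using hadj_flip b len by (simp add: z_def)
    then have "parity z = 0" using parity_hadj odd by simp
    moreover have "hadj z b" using hadj_flip[of j z] j len b by (simp add: z_def flip_commute)
    ultimately have "z = a" using closed[OF \<open>z \<in> A\<close>] \<open>b \<notin> A\<close> by blast
    then have "flip a j = flip a i" by (metis flip_flip z_def)
    then show False using j b len flip_eq_flip_iff by simp
  qed
  ultimately show ?thesis by blast
qed

lemma sum_card_neighbours_swap:
  assumes "finite X" "finite Y"
  shows "(\<Sum>x\<in>X. card {y \<in> Y. hadj x y}) = (\<Sum>y\<in>Y. card {x \<in> X. hadj y x})"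
proof -
  have "(\<Sum>x\<in>X. card {y \<in> Y. hadj x y}) = (\<Sum>x\<in>X. \<Sum>y\<in>Y. if hadj x y then 1 else 0)"
    using assms by (simp add: sum.If_cases Int_def)
  also have "\<dots> = (\<Sum>y\<in>Y. \<Sum>x\<in>X. if hadj y x then 1 else 0)"
    by (subst sum.swap) (intro sum.cong refl, meson hadj_sym)
  also have "\<dots> = (\<Sum>y\<in>Y. card {x \<in> X. hadj y x})"
    using assms by (simp add: sum.If_cases Int_def)
  finally show ?thesis .
qed

text \<open>Count the edges between the even and the odd vertices of \<open>A\<close>: from the even side
  there are \<open>n k - 1\<close>, from the odd side at most \<open>n k\<close> minus the number of odd vertices
  with a neighbour outside \<open>A\<close>.\<close>
lemma odd_exit_unique_if_single_even_exit:
  assumes A: "A \<subseteq> hverts n" and bal: "card0 A = card1 A"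
    and a: "a \<in> A" "parity a = 0" and b: "b \<notin> A" "hadj a b"
    and closed: "\<And>x w. x \<in> A \<Longrightarrow> parity x = 0 \<Longrightarrow> hadj x w \<Longrightarrow> w \<in> A \<or> (x = a \<and> w = b)"
    and y1: "y1 \<in> A" "parity y1 = 1" "hadj y1 z1" "z1 \<notin> A"
    and y2: "y2 \<in> A" "parity y2 = 1" "hadj y2 z2" "z2 \<notin> A"
  shows "y1 = y2"
proof (rule ccontr)
  assume "y1 \<noteq> y2"
  have len: "length x = n" if "x \<in> A" for x using A that by (auto simp: hverts_def)
  define S0 S1 where "S0 = {x \<in> A. parity x = 0}" and "S1 = {x \<in> A. parity x = 1}"
  have fin: "finite S0" "finite S1"
    using finite_subset[OF A finite_hverts] by (simp_all add: S0_def S1_def)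
  have k: "card S1 = card S0" using bal by (simp add: S0_def S1_def card0_def card1_def)
  have "n \<ge> 1" using len[OF a(1)] b(2) card_neighbours[of a] finite_neighbours[of a]
    by (metis One_nat_def Suc_leI card_gt_0_iff empty_iff mem_Collect_eq)
  have even_side: "card {y \<in> S1. hadj x y} + (if x \<in> {a} then 1 else 0) = n" if "x \<in> S0" for x
  proof -
    have "{y \<in> S1. hadj x y} = {y. hadj x y} - {b}"
      using that closed b parity_hadj by (auto simp: S0_def S1_def)
    moreover have "hadj x b \<longleftrightarrow> x = a" using that closed b by (auto simp: S0_def)
    ultimately show ?thesis
      using that \<open>n \<ge> 1\<close> len finite_neighbours card_neighbours
      by (auto simp: S0_def card_Diff_singleton_if)
  qed
  have odd_side: "card {x \<in> S0. hadj y x} + (if y \<in> {y1, y2} then 1 else 0) \<le> n" if "y \<in> S1" for y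
  proof (cases "y \<in> {y1, y2}")
    case True
    then obtain z where "hadj y z" "z \<notin> S0" using y1 y2 by (auto simp: S0_def)
    then show ?thesis
      using card_neighbours_in_le_if_outside len that True \<open>n \<ge> 1\<close> by (fastforce simp: S1_def)
  qed (use card_neighbours_in_le len that in \<open>auto simp: S1_def\<close>)
  have "a \<in> S0" "{y1, y2} \<subseteq> S1" using a y1 y2 by (auto simp: S0_def S1_def)
  have even_count: "(\<Sum>x\<in>S0. card {y \<in> S1. hadj x y}) + 1 = n * card S0"
    using sum_add_card_eq[OF fin(1), of "{a}"] even_side \<open>a \<in> S0\<close> by simp
  have "(\<Sum>y\<in>S1. card {x \<in> S0. hadj y x}) + 2
      = (\<Sum>y\<in>S1. card {x \<in> S0. hadj y x} + (if y \<in> {y1, y2} then 1 else 0))"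
    using sum_add_card_eq[OF fin(2) \<open>{y1, y2} \<subseteq> S1\<close>] \<open>y1 \<noteq> y2\<close> by simp
  also have "\<dots> \<le> (\<Sum>y\<in>S1. n)"
    by (rule sum_mono) (rule odd_side)
  also have "\<dots> = n * card S0" using k by simp
  finally show False using even_count sum_card_neighbours_swap[OF fin] by simp
qed

text \<open>For \<open>n \<ge> 3\<close> the vertex \<open>a\<close> has two odd neighbours \<open>y \<noteq> b\<close>, each with a
  neighbour outside \<open>A\<close> (next to \<open>b\<close>).\<close>
lemma balanced_set_has_second_even_exit:
  assumes n: "n \<ge> 3" and A: "A \<subseteq> hverts n" and bal: "card0 A = card1 A"
    and a: "a \<in> A" "parity a = 0" and b: "b \<notin> A" "hadj a b"
  shows "\<exists>x\<in>A. \<exists>w\<in>hverts n - A. parity x = 0 \<and> hadj x w \<and> (x, w) \<noteq> (a, b)"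
proof (rule ccontr)
  assume no_exit: "\<not> ?thesis"
  have len: "length a = n" using A a by (auto simp: hverts_def)
  have closed: "w \<in> A \<or> (x = a \<and> w = b)" if "x \<in> A" "parity x = 0" "hadj x w" for x w
  proof -
    have "w \<in> hverts n" using hadj_length[OF that(3)] A that(1) by (auto simp: hverts_def)
    then show ?thesis using no_exit that by blast
  qed
  obtain i where i: "i < n" "b = flip a i" using b(2) len by (auto simp: hadj_iff_flip)
  define j1 where "j1 = (if i = 0 then 1 else 0 :: nat)"
  define j2 where "j2 = (if i = 2 then 1 else 2 :: nat)"
  have j: "j1 < n" "j2 < n" "j1 \<noteq> i" "j2 \<noteq> i" "j1 \<noteq> j2" using n by (auto simp: j1_def j2_def)
  have y: "flip a j \<in> A \<and> parity (flip a j) = 1 \<and> hadj (flip a j) (flip (flip a j) i) \<and>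
      flip (flip a j) i \<notin> A" if "j < n" "j \<noteq> i" for j
    using odd_neighbour_with_exit[OF A a b(1) closed i(2,1) that] hadj_flip[of i "flip a j"] i len
    by simp
  have "flip a j1 = flip a j2"
    using odd_exit_unique_if_single_even_exit[OF A bal a b closed] y[OF j(1,3)] y[OF j(2,4)] by blast
  then show False using j len flip_eq_flip_iff by simp
qed
lemma not_minimal_if_single_edge_between:
  assumes n: "n \<ge> 3" and AB: "A \<union> B \<subset> hverts n" "A \<inter> B = {}"
    and bal: "card0 A = card1 A" "card0 B = card1 B"
    and ab: "a \<in> A" "b \<in> B" "hadj a b" "parity a = 0"
    and single: "\<And>x y. x \<in> A \<Longrightarrow> y \<in> B \<Longrightarrow> hadj x y \<Longrightarrow> x = a \<and> y = b"
    and cut: "\<forall>u\<in>A \<union> B. \<forall>v\<in>hverts n - (A \<union> B). parity u = 0 \<longrightarrow> hadj u v \<longrightarrow> {u, v} \<in> F"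
  shows "not_minimal n F"
proof -
  define F' where "F' = {e \<in> F. \<exists>u\<in>B. \<exists>w. parity u = 0 \<and> w \<notin> B \<and> e = {u, w}}"
  have "parity b = 1" using parity_hadj[OF ab(3)] ab(4) by simp
  have "\<not> ham_cycle n F' cyc" for cyc
  proof
    assume "ham_cycle n F' cyc"
    moreover have "B \<subseteq> hverts n" "B \<noteq> {}" "B \<noteq> hverts n" using AB ab by auto
    ultimately obtain u w where u: "u \<in> B" "parity u = 0" and w: "w \<in> hverts n - B" "hadj u w"
      and "{u, w} \<notin> F'"
      using ham_cycle_leaves_balanced_set bal(2) by blast
    moreover have "w \<notin> A" using single[OF _ u(1) hadj_sym[OF w(2)]] u(2) \<open>parity b = 1\<close> by auto
    ultimately show False using cut w by (auto simp: F'_def)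
  qed
  then have no_ham: "\<not> has_ham_cycle n F'" by (simp add: has_ham_cycle_def)
  obtain x w where x: "x \<in> A" "parity x = 0" and w: "w \<in> hverts n - A" "hadj x w" "(x, w) \<noteq> (a, b)"
    using balanced_set_has_second_even_exit[OF n _ bal(1) ab(1,4) _ ab(3)] AB ab by blast
  have "x \<notin> B" "w \<notin> B" using x w AB single by auto
  then have "{x, w} \<in> F - F'" using cut x w by (auto simp: F'_def doubleton_eq_iff)
  moreover have "F' \<subseteq> F" by (auto simp: F'_def)
  ultimately have "F' \<subset> F" by blast
  with no_ham show ?thesis by (auto simp: not_minimal_def)
qed

theorem lemma4:
  fixes n :: nat and F T T1 T2 and v1 v2 :: "bool list"
  assumes "n \<ge> 3"
    and "F \<subseteq> hedges n"
    and "T \<subset> hverts n"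
    and "card T \<ge> 3"
    and "card0 T \<ge> card1 T"
    and "\<forall>u\<in>T. \<forall>v\<in>hverts n - T. parity u = 0 \<longrightarrow> hadj u v \<longrightarrow> {u, v} \<in> F"
    and "T1 \<union> T2 = T" and "T1 \<inter> T2 = {}"
    and "induces_connected T1" and "induces_connected T2"
    and "card0 T1 = card1 T1" and "card0 T2 = card1 T2"
    and "v1 \<in> T1" and "v2 \<in> T2" and "hadj v1 v2"
    and "\<forall>p. ipath T p \<and> hd p = v1 \<and> last p = v2 \<longrightarrow> uses_edge p v1 v2"
  shows "not_minimal n F"
proof -
  have single: "x = v1 \<and> y = v2" if "x \<in> T1" "y \<in> T2" "hadj x y" for x y
    using edge_between_parts_unique[OF assms(8,9,10,13,14) _ that] assms(7,16) by blast
  consider "parity v1 = 0" | "parity v2 = 0"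
    using parity_hadj[OF assms(15)] parity_le_1[of v1] by linarith
  then show ?thesis
  proof cases
    case 1
    then show ?thesis
      using not_minimal_if_single_edge_between[OF assms(1) _ assms(8,11,12,13,14,15) 1 single]
        assms(3,6,7) by blast
  next
    case 2
    have "T2 \<union> T1 = T" "T2 \<inter> T1 = {}" using assms(7,8) by blast+
    then show ?thesis
      using not_minimal_if_single_edge_between[OF assms(1) _ _ assms(12,11,14,13) hadj_sym[OF assms(15)] 2]
        single hadj_sym assms(3,6) by blast
  qed
qed

end
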